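(* Let $G$ be an open localic groupoid. Then its associated quantale $\mathcal O(G)$, with the structure described in the context, is a groupoid quantale over the base locale $\mathcal O(G_0)$.
   Context: A localic groupoid $G$ has locales $G_0$ (objects), $G_1$ (arrows), maps $d,r:G_1\to G_0$, $u:G_0\to G_1$, $i:G_1\to G_1$, $m:G_2\to G_1$ where $G_2$ is the pullback of $r$ and $d$; it is open if $d$ is an open map of locales (then $m$ is open). $\mathcal O(G)$ is the frame $\mathcal O(G_1)$ with multiplication given by the composite $\mathcal O(G_1)\otimes\mathcal O(G_1)\to\mathcal O(G_2)\xrightarrow{m_!}\mathcal O(G_1)$, involution $q^*=i_!(q)=i^*(q)$, actions of $A=\mathcal O(G_0)$ given by $a\triangleright q=d^*(a)\wedge q$ and $q\triangleleft a=r^*(a)\wedge q$, support $\varsigma=d_!$ and $\upsilon=u^*$. Definitions: for a locale $A$, an $A$-$A$-bimodule is a sup-lattice $M$ with actions $a\triangleright m$, $m\triangleleft a$ preserving joins in each variable with $1_A\triangleright m=m$, $(a\wedge b)\triangleright m=a\triangleright(b\triangleright m)$, $m\triangleleft1_A=m$, $m\triangleleft(a\wedge b)=(m\triangleleft a)\triangleleft b$, $(a\triangleright m)\triangleleft b=a\triangleright(m\triangleleft b)$. An $A$-$A$-quantale is such a $Q$ with associative join-preserving multiplication and $(a\triangleright x)y=a\triangleright(xy)$, $(x\triangleleft a)y=x(a\triangleright y)$, $(xy)\triangleleft a=x(y\triangleleft a)$; involutive if there is a join-preserving $x\mapsto x^*$ with $x^{**}=x$, $(xy)^*=y^*x^*$,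 $(a\triangleright(x\triangleleft b))^*=b\triangleright(x^*\triangleleft a)$. $1_Q$ is the top. A support is a join-preserving $\varsigma:Q\to A$ with $\varsigma(1_Q)=1_A$, $\varsigma(x)\triangleright y\le xx^*y$, $\varsigma(x)\triangleright x=x$; equivariant if $\varsigma(a\triangleright x)=a\wedge\varsigma(x)$. A based quantal frame is an involutive $A$-$A$-quantale that is a frame with $(a\triangleright x)\wedge y=a\triangleright(x\wedge y)$, $(x\triangleleft a)\wedge y=(x\wedge y)\triangleleft a$; reflexive means a frame homomorphism $\upsilon:Q\to A$ with $\upsilon(a\triangleright1_Q)=a=\upsilon(1_Q\triangleleft a)$. $Q\otimes_AQ$ is $Q\otimes Q$ modulo $x\otimes(a\triangleright y)=(x\triangleleft a)\otimes y$, $\mu_A:Q\otimes_AQ\to Q$ the induced multiplication; multiplicative means the right adjoint of $\mu_A$ preserves joins. Unit laws: $\bigvee_{xy\le a}\upsilon(x)\triangleright y=a$ for all $a$; inverse law: $\upsilon(a)\triangleright1_Q=\bigvee_{xy^*\le a}x\wedge y$ for all $a$. A groupoid quantale is a multiplicative, equivariantly supported, reflexive based quantal frame satisfying the unit laws and the inverse law. *)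

theory Defs
  imports Main
begin

unbundle lattice_syntax

class frame = complete_lattice +
  assumes frame_inf_Sup: "x \<sqinter> Sup S = Sup ((\<lambda>s. x \<sqinter> s) ` S)"

text \<open>A map of locales f : X -> Y is represented by its inverse image frame
  homomorphism f^* : O(Y) -> O(X).\<close>

definition frame_hom :: "('a::complete_lattice \<Rightarrow> 'b::complete_lattice) \<Rightarrow> bool" where
  "frame_hom f \<longleftrightarrow> (\<forall>S. f (Sup S) = Sup (f ` S)) \<and> (\<forall>x y. f (x \<sqinter> y) = f x \<sqinter> f y) \<and> f top = top"

text \<open>Left adjoint f_! of a monotone map f^* (it is the left adjoint whenever one exists).\<close>
definition lower_adj :: "('a::complete_lattice \<Rightarrow> 'b::complete_lattice) \<Rightarrow> 'b \<Rightarrow> 'a" where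
  "lower_adj f z = Inf {w. z \<le> f w}"

definition open_map :: "('a::frame \<Rightarrow> 'b::frame) \<Rightarrow> bool" where
  "open_map f \<longleftrightarrow> frame_hom f \<and>
     (\<exists>g. (\<forall>x a. g x \<le> a \<longleftrightarrow> x \<le> f a) \<and> (\<forall>x a. g (x \<sqinter> f a) = g x \<sqinter> a))"

text \<open>For frame homs f : A -> L and g : A -> M (locale maps X -> Y <- Z), the pushout
  L (+)_A M is concretely the frame of saturated C-ideals of L x M: down-closed subsets
  closed under joins in each coordinate (including empty joins) and saturated with
  respect to the relations (x /\ f a) (x) y = x (x) (g a /\ y).\<close>

definition sat_C_ideal :: "('a \<Rightarrow> 'l::complete_lattice) \<Rightarrow> ('a \<Rightarrow> 'm::complete_lattice) \<Rightarrow> ('l \<times> 'm) set \<Rightarrow> bool" where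
  "sat_C_ideal f g D \<longleftrightarrow>
     (\<forall>x y x' y'. (x, y) \<in> D \<longrightarrow> x' \<le> x \<longrightarrow> y' \<le> y \<longrightarrow> (x', y') \<in> D) \<and>
     (\<forall>S y. (\<forall>x\<in>S. (x, y) \<in> D) \<longrightarrow> (Sup S, y) \<in> D) \<and>
     (\<forall>x T. (\<forall>y\<in>T. (x, y) \<in> D) \<longrightarrow> (x, Sup T) \<in> D) \<and>
     (\<forall>x y a. (x \<sqinter> f a, y) \<in> D \<longleftrightarrow> (x, g a \<sqinter> y) \<in> D)"

text \<open>P with p1 : L -> P, p2 : M -> P is a pushout of f, g in the category of frames
  (i.e. the corresponding locale is the pullback) iff p1, p2 are frame homs with
  p1 o f = p2 o g and the canonical comparison map from the concrete pushout is an
  order isomorphism.\<close>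

definition is_frame_pushout ::
  "('a \<Rightarrow> 'l::frame) \<Rightarrow> ('a \<Rightarrow> 'm::frame) \<Rightarrow> ('l \<Rightarrow> 'p::frame) \<Rightarrow> ('m \<Rightarrow> 'p) \<Rightarrow> bool" where
  "is_frame_pushout f g p1 p2 \<longleftrightarrow>
     frame_hom p1 \<and> frame_hom p2 \<and> p1 \<circ> f = p2 \<circ> g \<and>
     (let \<phi> = (\<lambda>D. Sup {p1 x \<sqinter> p2 y | x y. (x, y) \<in> D}) in
       bij_betw \<phi> {D. sat_C_ideal f g D} UNIV \<and>
       (\<forall>D E. sat_C_ideal f g D \<longrightarrow> sat_C_ideal f g E \<longrightarrow> \<phi> D \<le> \<phi> E \<longrightarrow> D \<subseteq> E))"

text \<open>Pairing: given a pushout (p1,p2) of (f,g) and frame homs h : L -> F, k : M -> F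
  with h o f = k o g, the induced frame hom P -> F (inverse image of the pairing map
  of locales into the pullback).\<close>
definition frame_pair ::
  "('l \<Rightarrow> 'p::complete_lattice) \<Rightarrow> ('m \<Rightarrow> 'p) \<Rightarrow> ('l \<Rightarrow> 'c::complete_lattice) \<Rightarrow> ('m \<Rightarrow> 'c) \<Rightarrow> 'p \<Rightarrow> 'c" where
  "frame_pair p1 p2 h k z = Sup {h x \<sqinter> k y | x y. p1 x \<sqinter> p2 y \<le> z}"

text \<open>Data, in terms of inverse image frame homomorphisms:
  d, r : O(G0) -> O(G1) (domain, range), u : O(G1) -> O(G0) (unit), i : O(G1) -> O(G1)
  (inverse), m : O(G1) -> O(G2) (multiplication), where O(G2) with p1, p2 : O(G1) -> O(G2)
  is the pushout of r and d (G2 = pullback of r and d: composable pairs (g,h) with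
  r g = d h), and O(G3) with q1 : O(G2) -> O(G3), q2 : O(G1) -> O(G3) is the pushout of
  p2 o r and d (G3 = pullback of r o pi2 : G2 -> G0 and d : G1 -> G0, composable triples).
  All axioms of an internal groupoid in Loc are expressed contravariantly.\<close>

definition localic_groupoid ::
  "('a0::frame \<Rightarrow> 'a1::frame) \<Rightarrow> ('a0 \<Rightarrow> 'a1) \<Rightarrow> ('a1 \<Rightarrow> 'a0) \<Rightarrow> ('a1 \<Rightarrow> 'a1)
   \<Rightarrow> ('a1 \<Rightarrow> 'a2::frame) \<Rightarrow> ('a1 \<Rightarrow> 'a2) \<Rightarrow> ('a1 \<Rightarrow> 'a2)
   \<Rightarrow> ('a2 \<Rightarrow> 'a3::frame) \<Rightarrow> ('a1 \<Rightarrow> 'a3) \<Rightarrow> bool" where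
  "localic_groupoid d r u i m p1 p2 q1 q2 \<longleftrightarrow>
     frame_hom d \<and> frame_hom r \<and> frame_hom u \<and> frame_hom i \<and> frame_hom m \<and>
     is_frame_pushout r d p1 p2 \<and>
     is_frame_pushout (p2 \<circ> r) d q1 q2 \<and>
     \<comment> \<open>d o u = id, r o u = id\<close>
     u \<circ> d = id \<and> u \<circ> r = id \<and>
     \<comment> \<open>d o m = d o pi1, r o m = r o pi2\<close>
     m \<circ> d = p1 \<circ> d \<and> m \<circ> r = p2 \<circ> r \<and>
     \<comment> \<open>associativity: m o (m x id) = m o (id x m) as maps G3 -> G1\<close>
     (let mxid = frame_pair p1 p2 (q1 \<circ> m) q2;
          pr23 = frame_pair p1 p2 (q1 \<circ> p2) q2;
          idxm = frame_pair p1 p2 (q1 \<circ> p1) (pr23 \<circ> m)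
      in mxid \<circ> m = idxm \<circ> m) \<and>
     \<comment> \<open>unit laws: m o <u o d, id> = id, m o <id, u o r> = id\<close>
     frame_pair p1 p2 (d \<circ> u) id \<circ> m = id \<and>
     frame_pair p1 p2 id (r \<circ> u) \<circ> m = id \<and>
     \<comment> \<open>inverse: d o i = r, r o i = d, m o <id, i> = u o d, m o <i, id> = u o r\<close>
     i \<circ> d = r \<and> i \<circ> r = d \<and>
     frame_pair p1 p2 id i \<circ> m = d \<circ> u \<and>
     frame_pair p1 p2 i id \<circ> m = r \<circ> u"

definition open_localic_groupoid where
  "open_localic_groupoid d r u i m p1 p2 q1 q2 \<longleftrightarrow>
     localic_groupoid d r u i m p1 p2 q1 q2 \<and> open_map d"

text \<open>lact a x = a |> x, ract x a = x <| a.\<close>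

definition bimodule :: "('a::frame \<Rightarrow> 'q::complete_lattice \<Rightarrow> 'q) \<Rightarrow> ('q \<Rightarrow> 'a \<Rightarrow> 'q) \<Rightarrow> bool" where
  "bimodule lact ract \<longleftrightarrow>
     (\<forall>S x. lact (Sup S) x = Sup ((\<lambda>a. lact a x) ` S)) \<and>
     (\<forall>a X. lact a (Sup X) = Sup (lact a ` X)) \<and>
     (\<forall>X a. ract (Sup X) a = Sup ((\<lambda>x. ract x a) ` X)) \<and>
     (\<forall>x S. ract x (Sup S) = Sup (ract x ` S)) \<and>
     (\<forall>x. lact top x = x) \<and>
     (\<forall>a b x. lact (a \<sqinter> b) x = lact a (lact b x)) \<and>
     (\<forall>x. ract x top = x) \<and>
     (\<forall>a b x. ract x (a \<sqinter> b) = ract (ract x a) b) \<and>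
     (\<forall>a b x. ract (lact a x) b = lact a (ract x b))"

definition AA_quantale ::
  "('a::frame \<Rightarrow> 'q::complete_lattice \<Rightarrow> 'q) \<Rightarrow> ('q \<Rightarrow> 'a \<Rightarrow> 'q) \<Rightarrow> ('q \<Rightarrow> 'q \<Rightarrow> 'q) \<Rightarrow> bool" where
  "AA_quantale lact ract mult \<longleftrightarrow>
     bimodule lact ract \<and>
     (\<forall>x y z. mult (mult x y) z = mult x (mult y z)) \<and>
     (\<forall>X y. mult (Sup X) y = Sup ((\<lambda>x. mult x y) ` X)) \<and>
     (\<forall>x Y. mult x (Sup Y) = Sup (mult x ` Y)) \<and>
     (\<forall>a x y. mult (lact a x) y = lact a (mult x y)) \<and>
     (\<forall>a x y. mult (ract x a) y = mult x (lact a y)) \<and>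
     (\<forall>a x y. ract (mult x y) a = mult x (ract y a))"

definition involutive_AA_quantale ::
  "('a::frame \<Rightarrow> 'q::complete_lattice \<Rightarrow> 'q) \<Rightarrow> ('q \<Rightarrow> 'a \<Rightarrow> 'q) \<Rightarrow> ('q \<Rightarrow> 'q \<Rightarrow> 'q) \<Rightarrow> ('q \<Rightarrow> 'q) \<Rightarrow> bool" where
  "involutive_AA_quantale lact ract mult invl \<longleftrightarrow>
     AA_quantale lact ract mult \<and>
     (\<forall>X. invl (Sup X) = Sup (invl ` X)) \<and>
     (\<forall>x. invl (invl x) = x) \<and>
     (\<forall>x y. invl (mult x y) = mult (invl y) (invl x)) \<and>
     (\<forall>a b x. invl (lact a (ract x b)) = lact b (ract (invl x) a))"

definition support ::
  "('a::frame \<Rightarrow> 'q::complete_lattice \<Rightarrow> 'q) \<Rightarrow> ('q \<Rightarrow> 'q \<Rightarrow> 'q) \<Rightarrow> ('q \<Rightarrow> 'q) \<Rightarrow> ('q \<Rightarrow> 'a) \<Rightarrow> bool" where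
  "support lact mult invl \<sigma> \<longleftrightarrow>
     (\<forall>X. \<sigma> (Sup X) = Sup (\<sigma> ` X)) \<and>
     \<sigma> top = top \<and>
     (\<forall>x y. lact (\<sigma> x) y \<le> mult (mult x (invl x)) y) \<and>
     (\<forall>x. lact (\<sigma> x) x = x)"

definition equivariant_support :: "('a::frame \<Rightarrow> 'q::complete_lattice \<Rightarrow> 'q) \<Rightarrow> ('q \<Rightarrow> 'a) \<Rightarrow> bool" where
  "equivariant_support lact \<sigma> \<longleftrightarrow> (\<forall>a x. \<sigma> (lact a x) = a \<sqinter> \<sigma> x)"

definition based_quantal_frame ::
  "('a::frame \<Rightarrow> 'q::frame \<Rightarrow> 'q) \<Rightarrow> ('q \<Rightarrow> 'a \<Rightarrow> 'q) \<Rightarrow> ('q \<Rightarrow> 'q \<Rightarrow> 'q) \<Rightarrow> ('q \<Rightarrow> 'q) \<Rightarrow> bool" where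
  "based_quantal_frame lact ract mult invl \<longleftrightarrow>
     involutive_AA_quantale lact ract mult invl \<and>
     (\<forall>a x y. lact a x \<sqinter> y = lact a (x \<sqinter> y)) \<and>
     (\<forall>a x y. ract x a \<sqinter> y = ract (x \<sqinter> y) a)"

definition reflexive ::
  "('a::frame \<Rightarrow> 'q::frame \<Rightarrow> 'q) \<Rightarrow> ('q \<Rightarrow> 'a \<Rightarrow> 'q) \<Rightarrow> ('q \<Rightarrow> 'a) \<Rightarrow> bool" where
  "reflexive lact ract \<upsilon> \<longleftrightarrow>
     frame_hom \<upsilon> \<and> (\<forall>a. \<upsilon> (lact a top) = a \<and> \<upsilon> (ract top a) = a)"

text \<open>Q (x) Q (tensor of sup-lattices) is the lattice of down-closed subsets of Q x Q closed
  under joins in each coordinate; Q (x)_A Q is its quotient by x (x) (a |> y) = (x <| a) (x) y,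
  i.e. the subsets which are moreover saturated for these relations. Joins are closures
  of unions, x (x) y corresponds to membership of (x,y).\<close>

definition tensA :: "('a \<Rightarrow> 'q::complete_lattice \<Rightarrow> 'q) \<Rightarrow> ('q \<Rightarrow> 'a \<Rightarrow> 'q) \<Rightarrow> ('q \<times> 'q) set set" where
  "tensA lact ract = {D.
     (\<forall>x y x' y'. (x, y) \<in> D \<longrightarrow> x' \<le> x \<longrightarrow> y' \<le> y \<longrightarrow> (x', y') \<in> D) \<and>
     (\<forall>S y. (\<forall>x\<in>S. (x, y) \<in> D) \<longrightarrow> (Sup S, y) \<in> D) \<and>
     (\<forall>x T. (\<forall>y\<in>T. (x, y) \<in> D) \<longrightarrow> (x, Sup T) \<in> D) \<and>
     (\<forall>x y a. (ract x a, y) \<in> D \<longleftrightarrow> (x, lact a y) \<in> D)}"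

definition tensA_Sup :: "('a \<Rightarrow> 'q::complete_lattice \<Rightarrow> 'q) \<Rightarrow> ('q \<Rightarrow> 'a \<Rightarrow> 'q) \<Rightarrow> ('q \<times> 'q) set set \<Rightarrow> ('q \<times> 'q) set" where
  "tensA_Sup lact ract F = \<Inter> {E \<in> tensA lact ract. \<Union> F \<subseteq> E}"

definition muA :: "('q::complete_lattice \<Rightarrow> 'q \<Rightarrow> 'q) \<Rightarrow> ('q \<times> 'q) set \<Rightarrow> 'q" where
  "muA mult D = Sup {mult x y | x y. (x, y) \<in> D}"

definition muA_radj ::
  "('a \<Rightarrow> 'q::complete_lattice \<Rightarrow> 'q) \<Rightarrow> ('q \<Rightarrow> 'a \<Rightarrow> 'q) \<Rightarrow> ('q \<Rightarrow> 'q \<Rightarrow> 'q) \<Rightarrow> 'q \<Rightarrow> ('q \<times> 'q) set" where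
  "muA_radj lact ract mult z = tensA_Sup lact ract {D \<in> tensA lact ract. muA mult D \<le> z}"

definition multiplicative ::
  "('a \<Rightarrow> 'q::complete_lattice \<Rightarrow> 'q) \<Rightarrow> ('q \<Rightarrow> 'a \<Rightarrow> 'q) \<Rightarrow> ('q \<Rightarrow> 'q \<Rightarrow> 'q) \<Rightarrow> bool" where
  "multiplicative lact ract mult \<longleftrightarrow>
     (\<forall>Z. muA_radj lact ract mult (Sup Z) = tensA_Sup lact ract (muA_radj lact ract mult ` Z))"

definition unit_laws :: "('a \<Rightarrow> 'q::complete_lattice \<Rightarrow> 'q) \<Rightarrow> ('q \<Rightarrow> 'q \<Rightarrow> 'q) \<Rightarrow> ('q \<Rightarrow> 'a) \<Rightarrow> bool" where
  "unit_laws lact mult \<upsilon> \<longleftrightarrow> (\<forall>a. Sup {lact (\<upsilon> x) y | x y. mult x y \<le> a} = a)"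

definition inverse_law ::
  "('a \<Rightarrow> 'q::complete_lattice \<Rightarrow> 'q) \<Rightarrow> ('q \<Rightarrow> 'q \<Rightarrow> 'q) \<Rightarrow> ('q \<Rightarrow> 'q) \<Rightarrow> ('q \<Rightarrow> 'a) \<Rightarrow> bool" where
  "inverse_law lact mult invl \<upsilon> \<longleftrightarrow>
     (\<forall>a. lact (\<upsilon> a) top = Sup {x \<sqinter> y | x y. mult x (invl y) \<le> a})"

definition groupoid_quantale ::
  "('a::frame \<Rightarrow> 'q::frame \<Rightarrow> 'q) \<Rightarrow> ('q \<Rightarrow> 'a \<Rightarrow> 'q) \<Rightarrow> ('q \<Rightarrow> 'q \<Rightarrow> 'q) \<Rightarrow> ('q \<Rightarrow> 'q)
    \<Rightarrow> ('q \<Rightarrow> 'a) \<Rightarrow> ('q \<Rightarrow> 'a) \<Rightarrow> bool" where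
  "groupoid_quantale lact ract mult invl \<sigma> \<upsilon> \<longleftrightarrow>
     based_quantal_frame lact ract mult invl \<and>
     multiplicative lact ract mult \<and>
     support lact mult invl \<sigma> \<and> equivariant_support lact \<sigma> \<and>
     reflexive lact ract \<upsilon> \<and>
     unit_laws lact mult \<upsilon> \<and> inverse_law lact mult invl \<upsilon>"

definition OG_lact :: "('a0 \<Rightarrow> 'a1::lattice) \<Rightarrow> 'a0 \<Rightarrow> 'a1 \<Rightarrow> 'a1" where
  "OG_lact d a q = d a \<sqinter> q"

definition OG_ract :: "('a0 \<Rightarrow> 'a1::lattice) \<Rightarrow> 'a1 \<Rightarrow> 'a0 \<Rightarrow> 'a1" where
  "OG_ract r q a = r a \<sqinter> q"

text \<open>x y = m_!(pi1^* x /\ pi2^* y): the image of x (x) y under O(G1) (x) O(G1) -> O(G2) -> O(G1).\<close>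
definition OG_mult :: "('a1::complete_lattice \<Rightarrow> 'a2::complete_lattice) \<Rightarrow> ('a1 \<Rightarrow> 'a2) \<Rightarrow> ('a1 \<Rightarrow> 'a2) \<Rightarrow> 'a1 \<Rightarrow> 'a1 \<Rightarrow> 'a1" where
  "OG_mult m p1 p2 x y = lower_adj m (p1 x \<sqinter> p2 y)"

end

theory Submission
  imports Defs
begin

text \<open>The frame \<open>O(G\<^sub>2)\<close> is the pushout \<open>O(G\<^sub>1) \<otimes>\<^bsub>O(G\<^sub>0)\<^esub> O(G\<^sub>1)\<close>, and its elements
  correspond to saturated ideals of pairs \<open>(x, y)\<close>. This gives the universal property in which
  the groupoid axioms are stated, and it identifies \<open>O(G) \<otimes>\<^sub>A O(G)\<close> with \<open>O(G\<^sub>2)\<close>, so that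
  \<open>\<mu>\<^sub>A\<close> becomes \<open>m\<^sub>!\<close> with right adjoint \<open>m\<^sup>*\<close> (multiplicativity). Openness of \<open>d\<close> is
  pulled back to the projection \<open>\<pi>\<^sub>1\<close> and transported along the shear involution
  \<open>(g, h) \<mapsto> (g h, h\<^sup>-\<^sup>1)\<close> of \<open>G\<^sub>2\<close>, so \<open>m\<close> is open: \<open>m\<^sub>!\<close> exists and satisfies Frobenius
  reciprocity. This yields the module and distributivity laws of \<open>x y = m\<^sub>!(\<pi>\<^sub>1\<^sup>* x \<sqinter> \<pi>\<^sub>2\<^sup>* y)\<close>,
  and, together with a Beck-Chevalley inequality for \<open>m \<times> id\<close>, its associativity. The unit and
  inverse laws of the quantale are the groupoid unit and inverse axioms evaluated pointwise,
  and the support is \<open>d\<^sub>!\<close>.\<close>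

section \<open>Frames, adjunctions and open maps\<close>

lemma frame_Sup_inf: "Sup S \<sqinter> (x::'a::frame) = (SUP s\<in>S. s \<sqinter> x)"
  using frame_inf_Sup[of x S] by (simp add: inf_commute)

lemma frame_Sup_inf_Sup_le:
  "(\<And>a b. a \<in> A \<Longrightarrow> b \<in> B \<Longrightarrow> a \<sqinter> b \<le> w) \<Longrightarrow> Sup A \<sqinter> Sup B \<le> (w::'a::frame)"
  by (simp add: frame_Sup_inf frame_inf_Sup SUP_le_iff)

lemma frame_hom_Sup: "frame_hom f \<Longrightarrow> f (Sup S) = Sup (f ` S)"
  unfolding frame_hom_def by blast

lemma frame_hom_inf: "frame_hom f \<Longrightarrow> f (x \<sqinter> y) = f x \<sqinter> f y"
  unfolding frame_hom_def by blast

lemma frame_hom_top: "frame_hom f \<Longrightarrow> f top = top"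
  unfolding frame_hom_def by blast

lemma frame_hom_mono: "frame_hom f \<Longrightarrow> x \<le> y \<Longrightarrow> f x \<le> f y"
  by (metis frame_hom_inf inf.absorb_iff2 le_iff_inf)

lemma frame_hom_id: "frame_hom id"
  unfolding frame_hom_def by simp

lemma frame_hom_comp: "frame_hom f \<Longrightarrow> frame_hom g \<Longrightarrow> frame_hom (f \<circ> g)"
  unfolding frame_hom_def by (simp add: image_comp)

lemma eq_iff_le_same: "(\<And>w. (x::'a::order) \<le> w \<longleftrightarrow> y \<le> w) \<Longrightarrow> x = y"
  by (meson order_refl order_antisym)

definition preserves_Sup :: "('a::complete_lattice \<Rightarrow> 'b::complete_lattice) \<Rightarrow> bool" where
  "preserves_Sup f \<longleftrightarrow> (\<forall>S. f (Sup S) = Sup (f ` S))"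

lemma preserves_SupD: "preserves_Sup f \<Longrightarrow> f (Sup S) = Sup (f ` S)"
  unfolding preserves_Sup_def by blast

lemma preserves_Sup_mono:
  assumes "preserves_Sup f" "x \<le> y"
  shows "f x \<le> f y"
proof -
  have "f x \<squnion> f y = f y"
    using preserves_SupD[OF assms(1), of "{x, y}"] assms(2) by (simp add: sup_absorb2)
  then show ?thesis by (simp add: le_iff_sup)
qed

lemma preserves_Sup_comp: "preserves_Sup f \<Longrightarrow> preserves_Sup g \<Longrightarrow> preserves_Sup (f \<circ> g)"
  unfolding preserves_Sup_def by (simp add: image_comp)

lemma frame_hom_preserves_Sup: "frame_hom f \<Longrightarrow> preserves_Sup f"
  unfolding preserves_Sup_def by (simp add: frame_hom_Sup)

lemma preserves_Sup_id: "preserves_Sup id"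
  unfolding preserves_Sup_def by simp

lemma involution_le_iff:
  assumes "mono h" "\<And>x. h (h x) = x"
  shows "h x \<le> y \<longleftrightarrow> x \<le> h y"
  by (metis assms monoD)

definition left_adjoint :: "('b::order \<Rightarrow> 'a::order) \<Rightarrow> ('a \<Rightarrow> 'b) \<Rightarrow> bool" where
  "left_adjoint g f \<longleftrightarrow> (\<forall>x a. g x \<le> a \<longleftrightarrow> x \<le> f a)"

lemma left_adjointD: "left_adjoint g f \<Longrightarrow> g x \<le> a \<longleftrightarrow> x \<le> f a"
  unfolding left_adjoint_def by blast

lemma left_adjoint_unit: "left_adjoint g f \<Longrightarrow> x \<le> f (g x)"
  by (simp add: left_adjointD[symmetric])

lemma left_adjoint_preserves_Sup: "left_adjoint g f \<Longrightarrow> preserves_Sup g"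
  unfolding preserves_Sup_def by (auto intro: eq_iff_le_same simp: left_adjointD Sup_le_iff)

lemma left_adjoint_commute:
  assumes "left_adjoint g f" and "mono h" "\<And>x. h (h x) = x" and "mono k" "\<And>x. k (k x) = x"
    and "\<And>a. f (h a) = k (f a)"
  shows "h (g s) = g (k s)"
proof (rule eq_iff_le_same)
  fix w
  have "h (g s) \<le> w \<longleftrightarrow> s \<le> k (f w)"
    using involution_le_iff[of h] assms by (simp add: left_adjointD)
  also have "\<dots> \<longleftrightarrow> g (k s) \<le> w"
    using involution_le_iff[of k] assms by (simp add: left_adjointD)
  finally show "h (g s) \<le> w \<longleftrightarrow> g (k s) \<le> w" .
qed

lemma lower_adj_eq: "left_adjoint g f \<Longrightarrow> lower_adj f = g"
  unfolding lower_adj_def left_adjoint_def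
  by (auto intro!: ext Inf_eqI)

lemma open_map_lower_adj:
  assumes "open_map f"
  shows "left_adjoint (lower_adj f) f" "lower_adj f (x \<sqinter> f a) = lower_adj f x \<sqinter> a"
proof -
  obtain g where "left_adjoint g f" "\<And>x a. g (x \<sqinter> f a) = g x \<sqinter> a"
    using assms unfolding open_map_def left_adjoint_def by blast
  then show "left_adjoint (lower_adj f) f" "lower_adj f (x \<sqinter> f a) = lower_adj f x \<sqinter> a"
    by (simp_all add: lower_adj_eq)
qed

lemma open_mapI:
  "frame_hom f \<Longrightarrow> left_adjoint g f \<Longrightarrow> (\<And>x a. g (x \<sqinter> f a) = g x \<sqinter> a) \<Longrightarrow> open_map f"
  unfolding open_map_def left_adjoint_def by blast

lemma open_map_frame_hom: "open_map f \<Longrightarrow> frame_hom f"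
  unfolding open_map_def by blast

lemma open_map_comp:
  assumes "open_map f" "open_map g"
  shows "open_map (f \<circ> g)"
proof (rule open_mapI)
  show "frame_hom (f \<circ> g)" using assms by (simp add: open_map_frame_hom frame_hom_comp)
  show "left_adjoint (lower_adj g \<circ> lower_adj f) (f \<circ> g)"
    using open_map_lower_adj(1)[OF assms(1)] open_map_lower_adj(1)[OF assms(2)]
    by (simp add: left_adjoint_def)
  show "(lower_adj g \<circ> lower_adj f) (x \<sqinter> (f \<circ> g) a) = (lower_adj g \<circ> lower_adj f) x \<sqinter> a" for x a
    by (simp add: open_map_lower_adj(2)[OF assms(1)] open_map_lower_adj(2)[OF assms(2)])
qed

lemma open_map_involution:
  assumes "frame_hom h" "\<And>x. h (h x) = x"
  shows "open_map h"
proof (rule open_mapI[OF assms(1)])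
  show "left_adjoint h h"
    using involution_le_iff[OF _ assms(2)] frame_hom_mono[OF assms(1)]
    by (simp add: left_adjoint_def monoI)
  show "h (x \<sqinter> h a) = h x \<sqinter> a" for x a
    by (simp add: frame_hom_inf[OF assms(1)] assms(2))
qed

section \<open>Pushouts of frames\<close>

lemma sat_C_ideal_le:
  fixes h :: "'l::complete_lattice \<Rightarrow> 'c::frame" and k :: "'m::complete_lattice \<Rightarrow> 'c"
  assumes h: "preserves_Sup h" and k: "preserves_Sup k"
    and balanced: "\<And>x y a. h (x \<sqinter> f a) \<sqinter> k y = h x \<sqinter> k (g a \<sqinter> y)"
  shows "sat_C_ideal f g {(x, y). h x \<sqinter> k y \<le> w}"
  unfolding sat_C_ideal_def
proof (intro conjI allI impI)
  fix x y x' y' assume xy: "(x, y) \<in> {(x, y). h x \<sqinter> k y \<le> w}" and "x' \<le> x" "y' \<le> y"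
  then have "h x' \<sqinter> k y' \<le> h x \<sqinter> k y"
    by (intro inf_mono preserves_Sup_mono[OF h] preserves_Sup_mono[OF k])
  also have "\<dots> \<le> w"
    using xy by simp
  finally show "(x', y') \<in> {(x, y). h x \<sqinter> k y \<le> w}"
    by simp
next
  fix S y assume "\<forall>x\<in>S. (x, y) \<in> {(x, y). h x \<sqinter> k y \<le> w}"
  then show "(Sup S, y) \<in> {(x, y). h x \<sqinter> k y \<le> w}"
    by (simp add: preserves_SupD[OF h] frame_Sup_inf SUP_le_iff)
next
  fix x T assume "\<forall>y\<in>T. (x, y) \<in> {(x, y). h x \<sqinter> k y \<le> w}"
  then show "(x, Sup T) \<in> {(x, y). h x \<sqinter> k y \<le> w}"
    by (simp add: preserves_SupD[OF k] frame_inf_Sup SUP_le_iff)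
qed (simp add: balanced)

locale frame_pushout =
  fixes f :: "'a::frame \<Rightarrow> 'l::frame" and g :: "'a \<Rightarrow> 'm::frame"
    and p1 :: "'l \<Rightarrow> 'p::frame" and p2 :: "'m \<Rightarrow> 'p"
  assumes pushout: "is_frame_pushout f g p1 p2"
begin

definition ideal_join :: "('l \<times> 'm) set \<Rightarrow> 'p" where
  "ideal_join D = Sup {p1 x \<sqinter> p2 y | x y. (x, y) \<in> D}"

definition ideal_below :: "'p \<Rightarrow> ('l \<times> 'm) set" where
  "ideal_below w = {(x, y). p1 x \<sqinter> p2 y \<le> w}"

lemma frame_hom_p1: "frame_hom p1"
  using pushout unfolding is_frame_pushout_def by blast

lemma frame_hom_p2: "frame_hom p2"
  using pushout unfolding is_frame_pushout_def by blast

lemma p1_f_eq_p2_g: "p1 (f a) = p2 (g a)"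
  using pushout unfolding is_frame_pushout_def by (metis comp_apply)

lemma ideal_join_surj: "\<exists>D. sat_C_ideal f g D \<and> ideal_join D = w"
proof -
  have "bij_betw ideal_join {D. sat_C_ideal f g D} UNIV"
    using pushout unfolding is_frame_pushout_def Let_def ideal_join_def[abs_def] by (elim conjE)
  then show ?thesis
    unfolding bij_betw_def by (metis UNIV_I imageE mem_Collect_eq)
qed

lemma ideal_join_reflects:
  "sat_C_ideal f g D \<Longrightarrow> sat_C_ideal f g E \<Longrightarrow> ideal_join D \<le> ideal_join E \<Longrightarrow> D \<subseteq> E"
  using pushout unfolding is_frame_pushout_def Let_def ideal_join_def[abs_def] by (elim conjE) blast

lemma ideal_join_mono: "D \<subseteq> E \<Longrightarrow> ideal_join D \<le> ideal_join E"
  unfolding ideal_join_def by (rule Sup_subset_mono) blast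

lemma sat_C_ideal_below: "sat_C_ideal f g (ideal_below w)"
  unfolding ideal_below_def
  by (rule sat_C_ideal_le)
    (simp_all add: frame_hom_preserves_Sup frame_hom_p1 frame_hom_p2
      frame_hom_inf[OF frame_hom_p1] frame_hom_inf[OF frame_hom_p2] p1_f_eq_p2_g inf_assoc)

lemma subset_ideal_below_join: "D \<subseteq> ideal_below (ideal_join D)"
  unfolding ideal_below_def ideal_join_def by (auto intro: Sup_upper)

lemma ideal_join_below: "ideal_join (ideal_below w) = w"
proof (rule antisym)
  show "ideal_join (ideal_below w) \<le> w"
    unfolding ideal_join_def ideal_below_def by (rule Sup_least) blast
  obtain D where "sat_C_ideal f g D" "ideal_join D = w"
    using ideal_join_surj by blast
  then have "D \<subseteq> ideal_below w"
    using subset_ideal_below_join by blast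
  then show "w \<le> ideal_join (ideal_below w)"
    using \<open>ideal_join D = w\<close> ideal_join_mono by blast
qed

lemma ideal_below_join: "sat_C_ideal f g D \<Longrightarrow> ideal_below (ideal_join D) = D"
  by (rule subset_antisym[OF ideal_join_reflects[OF sat_C_ideal_below] subset_ideal_below_join])
    (simp_all add: ideal_join_below)

lemma ideal_below_subset_iff: "ideal_below z \<subseteq> ideal_below w \<longleftrightarrow> z \<le> w"
proof
  show "ideal_below z \<subseteq> ideal_below w \<Longrightarrow> z \<le> w"
    by (metis ideal_join_below ideal_join_mono)
qed (auto simp: ideal_below_def)

lemma le_ideal_join_iff: "sat_C_ideal f g D \<Longrightarrow> z \<le> ideal_join D \<longleftrightarrow> ideal_below z \<subseteq> D"
  using ideal_below_subset_iff[of z "ideal_join D"] by (simp add: ideal_below_join)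

lemma ideal_join_le_iff: "sat_C_ideal f g D \<Longrightarrow> ideal_join D \<le> w \<longleftrightarrow> D \<subseteq> ideal_below w"
  using ideal_below_subset_iff[of "ideal_join D" w] by (simp add: ideal_below_join)

lemma generator_le_ideal_join_iff:
  "sat_C_ideal f g D \<Longrightarrow> p1 x \<sqinter> p2 y \<le> ideal_join D \<longleftrightarrow> (x, y) \<in> D"
  by (subst (2) ideal_below_join[symmetric]) (simp_all add: ideal_below_def)

lemma le_by_generators:
  assumes "\<And>x y. p1 x \<sqinter> p2 y \<le> z \<Longrightarrow> p1 x \<sqinter> p2 y \<le> w"
  shows "z \<le> w"
  using assms ideal_below_subset_iff unfolding ideal_below_def by blast

lemma frame_hom_eqI:
  assumes F: "frame_hom F" and G: "frame_hom G"
    and "\<And>x. F (p1 x) = G (p1 x)" and "\<And>y. F (p2 y) = G (p2 y)"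
  shows "F = G"
proof
  fix w
  define S where "S = {p1 x \<sqinter> p2 y | x y. (x, y) \<in> ideal_below w}"
  have "F ` S = G ` S"
    by (rule image_cong) (auto simp: S_def frame_hom_inf[OF F] frame_hom_inf[OF G] assms(3,4))
  moreover have "Sup S = w"
    using ideal_join_below unfolding S_def ideal_join_def .
  ultimately show "F w = G w"
    using frame_hom_Sup[OF F, of S] frame_hom_Sup[OF G, of S] by simp
qed

lemma frame_pair_mono: "z \<le> w \<Longrightarrow> frame_pair p1 p2 h k z \<le> frame_pair p1 p2 h k w"
  unfolding frame_pair_def by (rule Sup_subset_mono) (blast intro: order_trans)

context
  fixes h :: "'l \<Rightarrow> 'c::frame" and k :: "'m \<Rightarrow> 'c"
  assumes h: "preserves_Sup h" and k: "preserves_Sup k"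
    and balanced: "\<And>x y a. h (x \<sqinter> f a) \<sqinter> k y = h x \<sqinter> k (g a \<sqinter> y)"
begin

lemma frame_pair_le_iff:
  "frame_pair p1 p2 h k z \<le> w \<longleftrightarrow> z \<le> ideal_join {(x, y). h x \<sqinter> k y \<le> w}"
proof -
  have "frame_pair p1 p2 h k z \<le> w \<longleftrightarrow> ideal_below z \<subseteq> {(x, y). h x \<sqinter> k y \<le> w}"
    unfolding frame_pair_def ideal_below_def by (auto simp: Sup_le_iff)
  then show ?thesis
    by (simp add: le_ideal_join_iff sat_C_ideal_le[OF h k balanced])
qed

lemma frame_pair_preserves_Sup: "preserves_Sup (frame_pair p1 p2 h k)"
  unfolding preserves_Sup_def
  by (auto intro: eq_iff_le_same simp: frame_pair_le_iff Sup_le_iff)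

lemma frame_pair_generator: "frame_pair p1 p2 h k (p1 x \<sqinter> p2 y) = h x \<sqinter> k y"
proof (rule antisym)
  have "(x, y) \<in> {(x, y). h x \<sqinter> k y \<le> h x \<sqinter> k y}"
    by simp
  then show "frame_pair p1 p2 h k (p1 x \<sqinter> p2 y) \<le> h x \<sqinter> k y"
    by (simp add: frame_pair_le_iff generator_le_ideal_join_iff sat_C_ideal_le[OF h k balanced])
  show "h x \<sqinter> k y \<le> frame_pair p1 p2 h k (p1 x \<sqinter> p2 y)"
    unfolding frame_pair_def by (rule Sup_upper) blast
qed

end

context
  fixes h :: "'l \<Rightarrow> 'c::frame" and k :: "'m \<Rightarrow> 'c"
  assumes h: "frame_hom h" and k: "frame_hom k" and compatible: "\<And>a. h (f a) = k (g a)"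
begin

lemma frame_homs_balanced: "h (x \<sqinter> f a) \<sqinter> k y = h x \<sqinter> k (g a \<sqinter> y)"
  by (simp add: frame_hom_inf[OF h] frame_hom_inf[OF k] compatible inf_assoc)

lemmas frame_hom_pair_generator = frame_pair_generator
  [OF frame_hom_preserves_Sup[OF h] frame_hom_preserves_Sup[OF k] frame_homs_balanced]

lemma frame_pair_p1: "frame_pair p1 p2 h k (p1 x) = h x"
  using frame_hom_pair_generator[of x top]
  by (simp add: frame_hom_top[OF frame_hom_p2] frame_hom_top[OF k])

lemma frame_pair_p2: "frame_pair p1 p2 h k (p2 y) = k y"
  using frame_hom_pair_generator[of top y]
  by (simp add: frame_hom_top[OF frame_hom_p1] frame_hom_top[OF h])

lemma frame_hom_frame_pair: "frame_hom (frame_pair p1 p2 h k)"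
  unfolding frame_hom_def
proof (intro conjI allI)
  let ?F = "frame_pair p1 p2 h k"
  show "?F (Sup S) = Sup (?F ` S)" for S
    using frame_pair_preserves_Sup[OF frame_hom_preserves_Sup[OF h] frame_hom_preserves_Sup[OF k]
        frame_homs_balanced]
    by (simp add: preserves_SupD)
  show "?F top = top"
    using frame_pair_p1[of top] by (simp add: frame_hom_top[OF frame_hom_p1] frame_hom_top[OF h])
  fix z1 z2
  have "?F z1 \<sqinter> ?F z2 \<le> ?F (z1 \<sqinter> z2)"
    unfolding frame_pair_def[of _ _ _ _ z1] frame_pair_def[of _ _ _ _ z2]
  proof (rule frame_Sup_inf_Sup_le, safe)
    fix x1 y1 x2 y2
    assume "p1 x1 \<sqinter> p2 y1 \<le> z1" "p1 x2 \<sqinter> p2 y2 \<le> z2"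
    have "p1 (x1 \<sqinter> x2) \<sqinter> p2 (y1 \<sqinter> y2) = (p1 x1 \<sqinter> p2 y1) \<sqinter> (p1 x2 \<sqinter> p2 y2)"
      by (simp add: frame_hom_inf[OF frame_hom_p1] frame_hom_inf[OF frame_hom_p2] ac_simps)
    also have "\<dots> \<le> z1 \<sqinter> z2"
      using \<open>p1 x1 \<sqinter> p2 y1 \<le> z1\<close> \<open>p1 x2 \<sqinter> p2 y2 \<le> z2\<close> by (rule inf_mono)
    finally have "h (x1 \<sqinter> x2) \<sqinter> k (y1 \<sqinter> y2) \<le> ?F (z1 \<sqinter> z2)"
      unfolding frame_pair_def by (intro Sup_upper) blast
    then show "h x1 \<sqinter> k y1 \<sqinter> (h x2 \<sqinter> k y2) \<le> ?F (z1 \<sqinter> z2)"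
      by (simp add: frame_hom_inf[OF h] frame_hom_inf[OF k] ac_simps)
  qed
  moreover have "?F (z1 \<sqinter> z2) \<le> ?F z1 \<sqinter> ?F z2"
    unfolding frame_pair_def by (auto intro!: Sup_subset_mono intro: order_trans)
  ultimately show "?F (z1 \<sqinter> z2) = ?F z1 \<sqinter> ?F z2"
    by (rule antisym[rotated])
qed

lemma frame_pair_unique:
  "frame_hom F \<Longrightarrow> (\<And>x. F (p1 x) = h x) \<Longrightarrow> (\<And>y. F (p2 y) = k y) \<Longrightarrow> F = frame_pair p1 p2 h k"
  by (rule frame_hom_eqI[OF _ frame_hom_frame_pair]) (simp_all add: frame_pair_p1 frame_pair_p2)

end

definition p1_lower :: "'p \<Rightarrow> 'l" where
  "p1_lower = frame_pair p1 p2 id (f \<circ> lower_adj g)"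

text \<open>Open maps are stable under pullback: if \<open>g\<close> is open, then so is the projection \<open>p1\<close>,
  with \<open>(p1)\<^sub>!\<close> sending a generator \<open>x \<otimes> y\<close> to \<open>x \<sqinter> f (g\<^sub>! y)\<close>.\<close>

context
  assumes f: "frame_hom f" and g: "open_map g"
begin

lemma p1_lower_generator: "p1_lower (p1 x \<sqinter> p2 y) = x \<sqinter> f (lower_adj g y)"
  unfolding p1_lower_def
proof (rule trans[OF frame_pair_generator])
  show "preserves_Sup (f \<circ> lower_adj g)"
    using frame_hom_preserves_Sup[OF f] left_adjoint_preserves_Sup[OF open_map_lower_adj(1)[OF g]]
    by (rule preserves_Sup_comp)
  show "id (x \<sqinter> f a) \<sqinter> (f \<circ> lower_adj g) y = id x \<sqinter> (f \<circ> lower_adj g) (g a \<sqinter> y)" for x y a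
    using open_map_lower_adj(2)[OF g, of y a]
    by (simp add: inf_commute[of "g a"] frame_hom_inf[OF f] ac_simps)
qed (simp_all add: preserves_Sup_id)

lemma p1_lower_mono: "z \<le> w \<Longrightarrow> p1_lower z \<le> p1_lower w"
  unfolding p1_lower_def by (rule frame_pair_mono)

lemma left_adjoint_p1_lower: "left_adjoint p1_lower p1"
  unfolding left_adjoint_def
proof (intro allI iffI)
  fix z a
  assume "z \<le> p1 a"
  then have "p1_lower z \<le> p1_lower (p1 a \<sqinter> p2 top)"
    by (simp add: p1_lower_mono frame_hom_top[OF frame_hom_p2])
  then show "p1_lower z \<le> a"
    by (simp add: p1_lower_generator)
next
  fix z a
  assume "p1_lower z \<le> a"
  show "z \<le> p1 a"
  proof (rule le_by_generators)
    fix x y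
    assume xy: "p1 x \<sqinter> p2 y \<le> z"
    have "p2 y \<le> p1 (f (lower_adj g y))"
      using frame_hom_mono[OF frame_hom_p2 left_adjoint_unit[OF open_map_lower_adj(1)[OF g]]]
      by (simp add: p1_f_eq_p2_g)
    then have "p1 x \<sqinter> p2 y \<le> p1 (x \<sqinter> f (lower_adj g y))"
      by (auto simp: frame_hom_inf[OF frame_hom_p1] intro: le_infI2)
    also have "x \<sqinter> f (lower_adj g y) \<le> a"
      using p1_lower_mono[OF xy] \<open>p1_lower z \<le> a\<close> by (simp add: p1_lower_generator)
    then have "p1 (x \<sqinter> f (lower_adj g y)) \<le> p1 a"
      by (rule frame_hom_mono[OF frame_hom_p1])
    finally show "p1 x \<sqinter> p2 y \<le> p1 a" .
  qed
qed

lemma p1_lower_frobenius: "p1_lower (z \<sqinter> p1 a) = p1_lower z \<sqinter> a"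
proof (rule antisym)
  show "p1_lower (z \<sqinter> p1 a) \<le> p1_lower z \<sqinter> a"
    by (intro le_infI p1_lower_mono) (simp_all add: left_adjointD[OF left_adjoint_p1_lower])
  show "p1_lower z \<sqinter> a \<le> p1_lower (z \<sqinter> p1 a)"
    unfolding p1_lower_def frame_pair_def[of _ _ _ _ z] frame_Sup_inf
  proof (rule SUP_least, safe)
    fix x y
    assume "p1 x \<sqinter> p2 y \<le> z"
    then have "p1 (x \<sqinter> a) \<sqinter> p2 y \<le> z \<sqinter> p1 a"
      by (simp add: frame_hom_inf[OF frame_hom_p1] inf.coboundedI2 inf.left_commute inf_commute)
    then have "p1_lower (p1 (x \<sqinter> a) \<sqinter> p2 y) \<le> p1_lower (z \<sqinter> p1 a)"
      by (rule p1_lower_mono)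
    then show "id x \<sqinter> (f \<circ> lower_adj g) y \<sqinter> a \<le> frame_pair p1 p2 id (f \<circ> lower_adj g) (z \<sqinter> p1 a)"
      unfolding p1_lower_generator by (simp add: p1_lower_def ac_simps)
  qed
qed

lemma open_map_p1: "open_map p1"
  by (rule open_mapI[OF frame_hom_p1 left_adjoint_p1_lower p1_lower_frobenius])

end

end

section \<open>Localic groupoids\<close>

locale localic_gpd =
  fixes d r :: "'a0::frame \<Rightarrow> 'a1::frame" and u :: "'a1 \<Rightarrow> 'a0" and i :: "'a1 \<Rightarrow> 'a1"
    and m p1 p2 :: "'a1 \<Rightarrow> 'a2::frame" and q1 :: "'a2 \<Rightarrow> 'a3::frame" and q2 :: "'a1 \<Rightarrow> 'a3"
  assumes groupoid: "localic_groupoid d r u i m p1 p2 q1 q2"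
begin

lemma frame_hom_d: "frame_hom d"
  and frame_hom_r: "frame_hom r"
  and frame_hom_u: "frame_hom u"
  and frame_hom_i: "frame_hom i"
  and frame_hom_m: "frame_hom m"
  and pushout_G2: "is_frame_pushout r d p1 p2"
  and pushout_G3: "is_frame_pushout (p2 \<circ> r) d q1 q2"
  using groupoid unfolding localic_groupoid_def by blast+

lemma u_d [simp]: "u (d a) = a"
  and u_r [simp]: "u (r a) = a"
  and m_d: "m (d a) = p1 (d a)"
  and m_r: "m (r a) = p2 (r a)"
  and i_d [simp]: "i (d a) = r a"
  and i_r [simp]: "i (r a) = d a"
  using groupoid unfolding localic_groupoid_def by (metis comp_apply id_apply)+

sublocale G2: frame_pushout r d p1 p2
  by unfold_locales (rule pushout_G2)

sublocale G3: frame_pushout "p2 \<circ> r" d q1 q2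
  by unfold_locales (rule pushout_G3)

abbreviation pair :: "('a1 \<Rightarrow> 'c::frame) \<Rightarrow> ('a1 \<Rightarrow> 'c) \<Rightarrow> 'a2 \<Rightarrow> 'c" where
  "pair a b \<equiv> frame_pair p1 p2 a b"

lemma unit_left: "pair (d \<circ> u) id \<circ> m = id"
  and unit_right: "pair id (r \<circ> u) \<circ> m = id"
  and inverse_left: "pair id i \<circ> m = d \<circ> u"
  and inverse_right: "pair i id \<circ> m = r \<circ> u"
  using groupoid unfolding localic_groupoid_def by blast+

text \<open>Inverse images of the maps \<open>G\<^sub>3 \<rightarrow> G\<^sub>2\<close> sending \<open>(f, g, h)\<close> to \<open>(g, h)\<close>, \<open>(f g, h)\<close> and
  \<open>(f, g h)\<close> respectively.\<close>

definition proj23 :: "'a2 \<Rightarrow> 'a3" where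
  "proj23 = pair (q1 \<circ> p2) q2"

definition mult_times_id :: "'a2 \<Rightarrow> 'a3" where
  "mult_times_id = pair (q1 \<circ> m) q2"

definition id_times_mult :: "'a2 \<Rightarrow> 'a3" where
  "id_times_mult = pair (q1 \<circ> p1) (proj23 \<circ> m)"

lemma associative: "mult_times_id \<circ> m = id_times_mult \<circ> m"
  using groupoid
  unfolding localic_groupoid_def Let_def mult_times_id_def proj23_def id_times_mult_def
  by blast

lemma p1_r_eq_p2_d: "p1 (r a) = p2 (d a)"
  by (rule G2.p1_f_eq_p2_g)

lemma q1_p2_r_eq_q2_d: "q1 (p2 (r a)) = q2 (d a)"
  using G3.p1_f_eq_p2_g by simp

lemmas frame_hom_q1 = G3.frame_hom_p1
lemmas frame_hom_q2 = G3.frame_hom_p2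

lemma pair:
  fixes a b :: "'a1 \<Rightarrow> 'c::frame"
  assumes "frame_hom a" "frame_hom b" "\<And>x. a (r x) = b (d x)"
  shows "frame_hom (pair a b)" "pair a b (p1 x) = a x" "pair a b (p2 y) = b y"
  using assms by (simp_all add: G2.frame_hom_frame_pair G2.frame_pair_p1 G2.frame_pair_p2)

lemma pair_comp:
  fixes a b :: "'a1 \<Rightarrow> 'c::frame" and F :: "'c \<Rightarrow> 'e::frame"
  assumes "frame_hom F" "frame_hom a" "frame_hom b" "\<And>x. a (r x) = b (d x)"
  shows "F \<circ> pair a b = pair (F \<circ> a) (F \<circ> b)"
  using assms by (intro G2.frame_pair_unique) (simp_all add: frame_hom_comp pair)

lemma pair_p1_p2: "pair p1 p2 = id"
  by (rule G2.frame_pair_unique[symmetric])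
    (simp_all add: G2.frame_hom_p1 G2.frame_hom_p2 p1_r_eq_p2_d frame_hom_id)

lemma proj23: "frame_hom proj23" "proj23 (p1 x) = q1 (p2 x)" "proj23 (p2 x) = q2 x"
  unfolding proj23_def using pair[of "q1 \<circ> p2" q2]
  by (simp_all add: frame_hom_comp frame_hom_q1 frame_hom_q2 G2.frame_hom_p2 q1_p2_r_eq_q2_d)

lemma mult_times_id:
  "frame_hom mult_times_id" "mult_times_id (p1 x) = q1 (m x)" "mult_times_id (p2 x) = q2 x"
  unfolding mult_times_id_def using pair[of "q1 \<circ> m" q2]
  by (simp_all add: frame_hom_comp frame_hom_q1 frame_hom_q2 frame_hom_m m_r q1_p2_r_eq_q2_d)

lemma id_times_mult:
  "frame_hom id_times_mult" "id_times_mult (p1 x) = q1 (p1 x)" "id_times_mult (p2 x) = proj23 (m x)"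
  unfolding id_times_mult_def using pair[of "q1 \<circ> p1" "proj23 \<circ> m"]
  by (simp_all add: frame_hom_comp frame_hom_q1 G2.frame_hom_p1 frame_hom_m proj23 m_d p1_r_eq_p2_d)

lemma pair_assoc:
  fixes a b c :: "'a1 \<Rightarrow> 'c::frame"
  assumes a: "frame_hom a" and b: "frame_hom b" and c: "frame_hom c"
    and ab: "\<And>x. a (r x) = b (d x)" and bc: "\<And>x. b (r x) = c (d x)"
  shows "pair (pair a b \<circ> m) c \<circ> m = pair a (pair b c \<circ> m) \<circ> m"
proof -
  note ab_pair = pair[OF a b ab] and bc_pair = pair[OF b c bc]
  let ?t = "frame_pair q1 q2 (pair a b) c"
  have t_compat: "pair a b ((p2 \<circ> r) x) = c (d x)" for x
    by (simp add: ab_pair bc)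
  have t: "frame_hom ?t" "?t (q1 w) = pair a b w" "?t (q2 y) = c y" for w y
    using G3.frame_hom_frame_pair[OF ab_pair(1) c t_compat]
      G3.frame_pair_p1[OF ab_pair(1) c t_compat] G3.frame_pair_p2[OF ab_pair(1) c t_compat]
    by simp_all
  have "?t \<circ> mult_times_id = pair (pair a b \<circ> m) c"
    by (rule G2.frame_pair_unique)
      (simp_all add: frame_hom_comp ab_pair c frame_hom_m m_r bc t mult_times_id)
  moreover have "?t \<circ> proj23 = pair b c"
    by (rule G2.frame_pair_unique) (simp_all add: frame_hom_comp b c bc t proj23 ab_pair)
  then have "?t \<circ> id_times_mult = pair a (pair b c \<circ> m)"
    by (intro G2.frame_pair_unique)
      (simp_all add: frame_hom_comp a bc_pair frame_hom_m m_d ab t id_times_mult ab_pair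
        flip: comp_apply[of ?t proj23])
  ultimately show ?thesis
    using associative by (metis comp_assoc)
qed

lemma pair_comp_mult:
  fixes a :: "'a1 \<Rightarrow> 'c::frame"
  assumes "frame_hom a" "frame_hom h" "frame_hom k" "\<And>x. h (r x) = k (d x)"
  shows "pair (a \<circ> h) (a \<circ> k) \<circ> m = a \<circ> (pair h k \<circ> m)"
  by (simp only: pair_comp[OF assms, symmetric] comp_assoc)

lemma pair_unit_left: "frame_hom a \<Longrightarrow> pair (a \<circ> (d \<circ> u)) a \<circ> m = a"
  using pair_comp_mult[of a "d \<circ> u" id]
  by (simp add: frame_hom_comp frame_hom_d frame_hom_u frame_hom_id unit_left)

lemma pair_unit_right: "frame_hom a \<Longrightarrow> pair a (a \<circ> (r \<circ> u)) \<circ> m = a"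
  using pair_comp_mult[of a id "r \<circ> u"]
  by (simp add: frame_hom_comp frame_hom_r frame_hom_u frame_hom_id unit_right)

lemma pair_inverse_left: "frame_hom a \<Longrightarrow> pair a (a \<circ> i) \<circ> m = a \<circ> (d \<circ> u)"
  using pair_comp_mult[of a id i] by (simp add: frame_hom_i frame_hom_id inverse_left)

lemma pair_inverse_right: "frame_hom a \<Longrightarrow> pair (a \<circ> i) a \<circ> m = a \<circ> (r \<circ> u)"
  using pair_comp_mult[of a i id] by (simp add: frame_hom_i frame_hom_id inverse_right)

lemma i_i [simp]: "i (i x) = x"
proof -
  let ?j = "i \<circ> i"
  have j: "frame_hom ?j"
    by (simp add: frame_hom_comp frame_hom_i)
  have "?j \<circ> (d \<circ> u) = pair id i \<circ> m"
    by (auto simp: inverse_left)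
  then have "?j = pair (pair id i \<circ> m) ?j \<circ> m"
    using pair_unit_left[OF j] by simp
  also have "\<dots> = pair id (pair i ?j \<circ> m) \<circ> m"
    by (rule pair_assoc) (simp_all add: frame_hom_id frame_hom_i j)
  also have "pair i ?j \<circ> m = r \<circ> u"
    using pair_comp_mult[of i id i] inverse_left by (auto simp: frame_hom_id frame_hom_i)
  also have "pair id (r \<circ> u) \<circ> m = id"
    by (rule unit_right)
  finally show ?thesis
    by (metis comp_apply id_apply)
qed

text \<open>The shear \<open>(g, h) \<mapsto> (g h, h\<^sup>-\<^sup>1)\<close>, an involution of \<open>G\<^sub>2\<close> with \<open>m = \<pi>\<^sub>1 \<circ> shear\<close>.\<close>

definition shear :: "'a2 \<Rightarrow> 'a2" where
  "shear = pair m (p2 \<circ> i)"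

lemma shear: "frame_hom shear" "shear (p1 x) = m x" "shear (p2 x) = p2 (i x)"
  unfolding shear_def using pair[of m "p2 \<circ> i"]
  by (simp_all add: frame_hom_comp frame_hom_m frame_hom_i G2.frame_hom_p2 m_r)

lemma shear_m: "shear (m x) = p1 x"
proof -
  have "shear \<circ> m = pair (pair p1 p2 \<circ> m) (p2 \<circ> i) \<circ> m"
    by (simp add: shear_def pair_p1_p2)
  also have "\<dots> = pair p1 (pair p2 (p2 \<circ> i) \<circ> m) \<circ> m"
    by (rule pair_assoc)
      (simp_all add: G2.frame_hom_p1 G2.frame_hom_p2 frame_hom_comp frame_hom_i p1_r_eq_p2_d)
  also have "pair p2 (p2 \<circ> i) \<circ> m = p1 \<circ> (r \<circ> u)"
    using pair_inverse_left[OF G2.frame_hom_p2] by (auto simp: p1_r_eq_p2_d)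
  also have "pair p1 (p1 \<circ> (r \<circ> u)) \<circ> m = p1"
    by (rule pair_unit_right[OF G2.frame_hom_p1])
  finally show ?thesis
    by (metis comp_apply)
qed

lemma shear_shear [simp]: "shear (shear z) = z"
  using G2.frame_hom_eqI[of "shear \<circ> shear" id]
  by (simp add: frame_hom_comp shear shear_m frame_hom_id fun_eq_iff)

text \<open>\<open>(g, h) \<mapsto> (h\<^sup>-\<^sup>1, g\<^sup>-\<^sup>1)\<close>\<close>

definition swap :: "'a2 \<Rightarrow> 'a2" where
  "swap = pair (p2 \<circ> i) (p1 \<circ> i)"

lemma swap: "frame_hom swap" "swap (p1 x) = p2 (i x)" "swap (p2 x) = p1 (i x)"
  unfolding swap_def using pair[of "p2 \<circ> i" "p1 \<circ> i"]
  by (simp_all add: frame_hom_comp frame_hom_i G2.frame_hom_p1 G2.frame_hom_p2 p1_r_eq_p2_d)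

lemma swap_swap: "swap (swap z) = z"
  using G2.frame_hom_eqI[of "swap \<circ> swap" id]
  by (simp add: frame_hom_comp swap frame_hom_id fun_eq_iff)

lemma pair_inverse_mult: "pair (p1 \<circ> i) m \<circ> m = p2"
proof -
  have "pair (p1 \<circ> i) m \<circ> m = pair (pair (p1 \<circ> i) p1 \<circ> m) p2 \<circ> m"
    using pair_assoc[of "p1 \<circ> i" p1 p2]
    by (simp add: pair_p1_p2 frame_hom_comp frame_hom_i G2.frame_hom_p1 G2.frame_hom_p2
        p1_r_eq_p2_d)
  also have "pair (p1 \<circ> i) p1 \<circ> m = p2 \<circ> (d \<circ> u)"
    using pair_inverse_right[OF G2.frame_hom_p1] by (auto simp: p1_r_eq_p2_d)
  also have "pair (p2 \<circ> (d \<circ> u)) p2 \<circ> m = p2"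
    by (rule pair_unit_left[OF G2.frame_hom_p2])
  finally show ?thesis .
qed

lemma m_i: "m (i x) = swap (m x)"
proof -
  let ?A = "swap \<circ> m" and ?B = "m \<circ> i"
  have A: "frame_hom ?A" and B: "frame_hom ?B"
    by (simp_all add: frame_hom_comp swap frame_hom_m frame_hom_i)
  have "pair ?A m \<circ> m = pair (pair (p2 \<circ> i) (p1 \<circ> i) \<circ> m) m \<circ> m"
    by (simp add: swap_def)
  also have "\<dots> = pair (p2 \<circ> i) (pair (p1 \<circ> i) m \<circ> m) \<circ> m"
    by (rule pair_assoc)
      (simp_all add: frame_hom_comp frame_hom_i frame_hom_m G2.frame_hom_p1 G2.frame_hom_p2
        p1_r_eq_p2_d m_d)
  also have "\<dots> = p2 \<circ> (r \<circ> u)"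
    using pair_inverse_right[OF G2.frame_hom_p2] by (simp add: pair_inverse_mult)
  finally have A_m: "pair ?A m \<circ> m = ?B \<circ> (d \<circ> u)"
    by (auto simp: m_r)
  have "?A \<circ> (r \<circ> u) = m \<circ> (d \<circ> u)"
    by (auto simp: m_r m_d swap)
  also have "\<dots> = pair m ?B \<circ> m"
    by (rule pair_inverse_left[OF frame_hom_m, symmetric])
  finally have "?A = pair ?A (pair m ?B \<circ> m) \<circ> m"
    using pair_unit_right[OF A] by simp
  also have "\<dots> = pair (pair ?A m \<circ> m) ?B \<circ> m"
    by (rule pair_assoc[symmetric]) (simp_all add: A B frame_hom_m m_r m_d swap)
  also have "\<dots> = ?B"
    unfolding A_m by (rule pair_unit_left[OF B])
  finally show ?thesis
    by (metis comp_apply)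
qed

end

section \<open>The quantale of an open groupoid\<close>

locale open_localic_gpd = localic_gpd +
  assumes open_d: "open_map d"
begin

lemma open_map_m: "open_map m"
proof -
  have "m = shear \<circ> p1"
    by (simp add: fun_eq_iff shear)
  moreover have "open_map p1"
    by (rule G2.open_map_p1[OF frame_hom_r open_d])
  ultimately show ?thesis
    using open_map_comp[OF open_map_involution[OF shear(1) shear_shear]] by metis
qed

lemma left_adjoint_lower_m: "left_adjoint (lower_adj m) m"
  by (rule open_map_lower_adj(1)[OF open_map_m])

lemma lower_m_adj: "lower_adj m s \<le> a \<longleftrightarrow> s \<le> m a"
  by (rule left_adjointD[OF left_adjoint_lower_m])

lemma lower_m_frobenius: "lower_adj m (s \<sqinter> m a) = lower_adj m s \<sqinter> a"
  using open_map_lower_adj(2)[OF open_map_m] .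

lemma lower_d_adj: "lower_adj d x \<le> a \<longleftrightarrow> x \<le> d a"
  using left_adjointD[OF open_map_lower_adj(1)[OF open_d]] .

lemma lower_d_frobenius: "lower_adj d (x \<sqinter> d a) = lower_adj d x \<sqinter> a"
  using open_map_lower_adj(2)[OF open_d] .

lemma i_lower_m: "i (lower_adj m s) = lower_adj m (swap s)"
  by (rule left_adjoint_commute[OF left_adjoint_lower_m])
    (simp_all add: m_i swap_swap monoI frame_hom_mono[OF frame_hom_i]
      frame_hom_mono[OF swap(1)])

abbreviation "mult \<equiv> OG_mult m p1 p2"

lemma mult_eq: "mult x y = lower_adj m (p1 x \<sqinter> p2 y)"
  by (simp add: OG_mult_def)

lemma lower_m_preserves_Sup: "preserves_Sup (lower_adj m)"
  by (rule left_adjoint_preserves_Sup[OF left_adjoint_lower_m])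

lemma i_mult: "i (mult x y) = mult (i y) (i x)"
  by (simp add: mult_eq i_lower_m frame_hom_inf[OF swap(1)] swap inf_commute)

text \<open>The Beck-Chevalley inequality \<open>(m \<times> id)\<^sub>! (s \<otimes> z) \<le> m\<^sub>! s \<otimes> z\<close>, in adjoint form.\<close>

lemma mult_times_id_beck_chevalley:
  assumes "q1 s \<sqinter> q2 z \<le> mult_times_id v"
  shows "p1 (lower_adj m s) \<sqinter> p2 z \<le> v"
proof -
  let ?E = "{(s, z). (p1 \<circ> lower_adj m) s \<sqinter> p2 z \<le> v}"
  have E: "sat_C_ideal (p2 \<circ> r) d ?E"
  proof (rule sat_C_ideal_le)
    show "preserves_Sup (p1 \<circ> lower_adj m)" "preserves_Sup p2"
      by (simp_all add: preserves_Sup_comp frame_hom_preserves_Sup G2.frame_hom_p1 G2.frame_hom_p2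
          lower_m_preserves_Sup)
    show "(p1 \<circ> lower_adj m) (x \<sqinter> (p2 \<circ> r) a) \<sqinter> p2 y
        = (p1 \<circ> lower_adj m) x \<sqinter> p2 (d a \<sqinter> y)" for x y a
      using lower_m_frobenius[of x "r a"]
      by (simp add: m_r frame_hom_inf[OF G2.frame_hom_p1] frame_hom_inf[OF G2.frame_hom_p2]
          p1_r_eq_p2_d ac_simps)
  qed
  have "mult_times_id v \<le> G3.ideal_join ?E"
    unfolding mult_times_id_def frame_pair_def
  proof (rule Sup_least, safe)
    fix x y
    assume xy: "p1 x \<sqinter> p2 y \<le> v"
    have "p1 (lower_adj m (m x)) \<le> p1 x"
      by (simp add: frame_hom_mono[OF G2.frame_hom_p1] lower_m_adj)
    then have "p1 (lower_adj m (m x)) \<sqinter> p2 y \<le> v"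
      using xy by (meson inf_mono order_refl order_trans)
    then have "(m x, y) \<in> ?E"
      by simp
    then show "(q1 \<circ> m) x \<sqinter> q2 y \<le> G3.ideal_join ?E"
      using G3.generator_le_ideal_join_iff[OF E, of "m x" y] by simp
  qed
  with assms have "q1 s \<sqinter> q2 z \<le> G3.ideal_join ?E"
    by (rule order_trans)
  then have "(s, z) \<in> ?E"
    by (simp only: G3.generator_le_ideal_join_iff[OF E])
  then show ?thesis
    by simp
qed

lemma mult_assoc_le: "mult (mult x y) z \<le> mult x (mult y z)"
proof -
  let ?yz = "lower_adj m (p1 y \<sqinter> p2 z)" and ?w = "mult x (mult y z)"
  have "q1 (p2 y) \<sqinter> q2 z \<le> proj23 (m ?yz)"
    using frame_hom_mono[OF proj23(1) left_adjoint_unit[OF left_adjoint_lower_m, of "p1 y \<sqinter> p2 z"]]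
    by (simp add: frame_hom_inf[OF proj23(1)] proj23)
  then have "q1 (p1 x) \<sqinter> (q1 (p2 y) \<sqinter> q2 z) \<le> q1 (p1 x) \<sqinter> proj23 (m ?yz)"
    by (rule inf_mono[OF order_refl])
  then have "q1 (p1 x \<sqinter> p2 y) \<sqinter> q2 z \<le> id_times_mult (p1 x \<sqinter> p2 ?yz)"
    by (simp add: frame_hom_inf[OF frame_hom_q1] frame_hom_inf[OF id_times_mult(1)] id_times_mult
        inf_assoc)
  also have "\<dots> \<le> id_times_mult (m ?w)"
    by (intro frame_hom_mono[OF id_times_mult(1)]) (simp add: mult_eq flip: lower_m_adj)
  also have "\<dots> = mult_times_id (m ?w)"
    using associative by (metis comp_apply)
  finally have "p1 (lower_adj m (p1 x \<sqinter> p2 y)) \<sqinter> p2 z \<le> m ?w"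
    by (rule mult_times_id_beck_chevalley)
  then show ?thesis
    by (simp add: mult_eq lower_m_adj)
qed

lemma mult_assoc: "mult (mult x y) z = mult x (mult y z)"
proof (rule antisym[OF mult_assoc_le])
  have "i (mult x (mult y z)) \<le> i (mult (mult x y) z)"
    using mult_assoc_le[of "i z" "i y" "i x"] by (simp add: i_mult)
  then show "mult x (mult y z) \<le> mult (mult x y) z"
    using frame_hom_mono[OF frame_hom_i] by fastforce
qed

abbreviation "lact \<equiv> OG_lact d"
abbreviation "ract \<equiv> OG_ract r"

lemma based_quantal_frame: "based_quantal_frame lact ract mult i"
  unfolding based_quantal_frame_def involutive_AA_quantale_def AA_quantale_def
proof (intro conjI allI)
  show "bimodule lact ract"
    unfolding bimodule_def OG_lact_def OG_ract_def
    by (simp add: frame_hom_Sup[OF frame_hom_d] frame_hom_Sup[OF frame_hom_r]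
        frame_hom_inf[OF frame_hom_d] frame_hom_inf[OF frame_hom_r]
        frame_hom_top[OF frame_hom_d] frame_hom_top[OF frame_hom_r]
        frame_Sup_inf frame_inf_Sup image_image ac_simps)
  show "mult (Sup X) y = Sup ((\<lambda>x. mult x y) ` X)" for X y
    using preserves_SupD[OF lower_m_preserves_Sup]
    by (simp add: mult_eq frame_hom_Sup[OF G2.frame_hom_p1] frame_Sup_inf image_image)
  show "mult x (Sup Y) = Sup (mult x ` Y)" for x Y
    using preserves_SupD[OF lower_m_preserves_Sup]
    by (simp add: mult_eq frame_hom_Sup[OF G2.frame_hom_p2] frame_inf_Sup image_image)
  show "mult (lact a x) y = lact a (mult x y)" for a x y
    using lower_m_frobenius[of "p1 x \<sqinter> p2 y" "d a"]
    by (simp add: mult_eq OG_lact_def frame_hom_inf[OF G2.frame_hom_p1] m_d ac_simps)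
  show "mult (ract x a) y = mult x (lact a y)" for a x y
    by (simp add: mult_eq OG_lact_def OG_ract_def frame_hom_inf[OF G2.frame_hom_p1]
        frame_hom_inf[OF G2.frame_hom_p2] p1_r_eq_p2_d ac_simps)
  show "ract (mult x y) a = mult x (ract y a)" for a x y
    using lower_m_frobenius[of "p1 x \<sqinter> p2 y" "r a"]
    by (simp add: mult_eq OG_ract_def frame_hom_inf[OF G2.frame_hom_p2] m_r ac_simps)
  show "i (lact a (ract x b)) = lact b (ract (i x) a)" for a b x
    by (simp add: OG_lact_def OG_ract_def frame_hom_inf[OF frame_hom_i] ac_simps)
qed (simp_all add: mult_assoc frame_hom_Sup[OF frame_hom_i] i_mult OG_lact_def OG_ract_def
    inf_assoc)

lemma tensA_eq: "tensA lact ract = {D. sat_C_ideal r d D}"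
  unfolding tensA_def sat_C_ideal_def OG_lact_def OG_ract_def by (simp add: inf_commute)

lemma tensA_Sup_eqI:
  assumes "sat_C_ideal r d X" "\<And>E. sat_C_ideal r d E \<Longrightarrow> \<Union>F \<subseteq> E \<longleftrightarrow> X \<subseteq> E"
  shows "tensA_Sup lact ract F = X"
  unfolding tensA_Sup_def tensA_eq using assms by blast

lemma muA_eq: "muA mult D = lower_adj m (G2.ideal_join D)"
proof -
  have "{mult x y | x y. (x, y) \<in> D} = lower_adj m ` {p1 x \<sqinter> p2 y | x y. (x, y) \<in> D}"
    by (auto simp: mult_eq)
  then show ?thesis
    unfolding muA_def G2.ideal_join_def by (simp add: preserves_SupD[OF lower_m_preserves_Sup])
qed

lemma muA_radj_eq: "muA_radj lact ract mult z = G2.ideal_below (m z)"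
proof -
  have "{D \<in> tensA lact ract. muA mult D \<le> z} = {D. sat_C_ideal r d D \<and> D \<subseteq> G2.ideal_below (m z)}"
    by (auto simp: tensA_eq muA_eq lower_m_adj G2.ideal_join_le_iff)
  moreover have
    "tensA_Sup lact ract {D. sat_C_ideal r d D \<and> D \<subseteq> G2.ideal_below (m z)} = G2.ideal_below (m z)"
    by (rule tensA_Sup_eqI[OF G2.sat_C_ideal_below]) (use G2.sat_C_ideal_below in blast)
  ultimately show ?thesis
    unfolding muA_radj_def by simp
qed

lemma multiplicative: "multiplicative lact ract mult"
  unfolding multiplicative_def muA_radj_eq
proof (intro allI tensA_Sup_eqI[symmetric, OF G2.sat_C_ideal_below])
  fix Z E
  assume E: "sat_C_ideal r d E"
  have "\<Union>((\<lambda>z. G2.ideal_below (m z)) ` Z) \<subseteq> E \<longleftrightarrow> (\<forall>z\<in>Z. m z \<le> G2.ideal_join E)"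
    by (auto simp: G2.le_ideal_join_iff[OF E])
  also have "\<dots> \<longleftrightarrow> G2.ideal_below (m (Sup Z)) \<subseteq> E"
    by (simp add: G2.le_ideal_join_iff[OF E, symmetric] frame_hom_Sup[OF frame_hom_m] Sup_le_iff)
  finally show "\<Union>((\<lambda>z. G2.ideal_below (m z)) ` Z) \<subseteq> E \<longleftrightarrow> G2.ideal_below (m (Sup Z)) \<subseteq> E" .
qed

lemma pair_generator_le_pair_m_mult:
  fixes h k :: "_ \<Rightarrow> 'x::frame"
  assumes "frame_hom h" "frame_hom k" "\<And>a. h (r a) = k (d a)"
  shows "h x \<sqinter> k y \<le> pair h k (m (mult x y))"
proof -
  have "p1 x \<sqinter> p2 y \<le> m (mult x y)"
    by (simp add: mult_eq flip: lower_m_adj)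
  then show ?thesis
    using G2.frame_pair_mono G2.frame_hom_pair_generator[OF assms] by metis
qed

lemma pair_m_eq_Sup: "pair h k (m a) = Sup {h x \<sqinter> k y | x y. mult x y \<le> a}"
  by (simp add: frame_pair_def mult_eq lower_m_adj)

lemma lower_d_top: "lower_adj d top = top"
proof -
  have "d (lower_adj d top) = top"
    using lower_d_adj[of top "lower_adj d top"] by (simp add: top_unique)
  then show ?thesis
    by (metis u_d frame_hom_top[OF frame_hom_u])
qed

lemma support: "support lact mult i (lower_adj d)"
  unfolding support_def
proof (intro conjI allI)
  show "lower_adj d (Sup X) = Sup (lower_adj d ` X)" for X
    by (rule preserves_SupD[OF left_adjoint_preserves_Sup[OF open_map_lower_adj(1)[OF open_d]]])
  show "lower_adj d top = top"
    by (rule lower_d_top)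
  show "lact (lower_adj d x) x = x" for x
    using lower_d_adj[of x "lower_adj d x"] by (simp add: OG_lact_def inf_absorb2)
  fix x y
  let ?w = "mult x (i x)"
  have "x \<le> pair id i (m ?w)"
    using pair_generator_le_pair_m_mult[of id i x "i x"] by (simp add: frame_hom_id frame_hom_i)
  then have "lower_adj d x \<le> u ?w"
    using inverse_left by (simp add: lower_d_adj fun_eq_iff)
  then have "d (lower_adj d x) \<sqinter> y \<le> d (u ?w) \<sqinter> y"
    by (intro inf_mono frame_hom_mono[OF frame_hom_d]) simp_all
  also have "\<dots> \<le> pair (d \<circ> u) id (m (mult ?w y))"
    using pair_generator_le_pair_m_mult[of "d \<circ> u" id]
    by (simp add: frame_hom_comp frame_hom_d frame_hom_u frame_hom_id)
  also have "\<dots> = mult ?w y"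
    using unit_left by (simp add: fun_eq_iff)
  finally show "lact (lower_adj d x) y \<le> mult (mult x (i x)) y"
    by (simp add: OG_lact_def)
qed

lemma equivariant_support: "equivariant_support lact (lower_adj d)"
  unfolding equivariant_support_def OG_lact_def
  by (simp add: inf_commute[of "d _"] lower_d_frobenius inf_commute)

lemma reflexive: "reflexive lact ract u"
  unfolding reflexive_def OG_lact_def OG_ract_def
  by (simp add: frame_hom_u frame_hom_inf[OF frame_hom_u] frame_hom_top[OF frame_hom_u])

lemma unit_laws: "unit_laws lact mult u"
  unfolding unit_laws_def OG_lact_def
  using unit_left by (simp add: fun_eq_iff pair_m_eq_Sup)

lemma inverse_law: "inverse_law lact mult i u"
  unfolding inverse_law_def OG_lact_def
proof
  fix a
  have "d (u a) = pair id i (m a)"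
    using inverse_left by (metis comp_apply)
  also have "\<dots> = Sup {x \<sqinter> i y | x y. mult x y \<le> a}"
    by (simp add: pair_m_eq_Sup)
  also have "{x \<sqinter> i y | x y. mult x y \<le> a} = {x \<sqinter> y | x y. mult x (i y) \<le> a}"
    by (metis i_i)
  finally show "d (u a) \<sqinter> top = Sup {x \<sqinter> y | x y. mult x (i y) \<le> a}"
    by simp
qed

lemma groupoid_quantale: "groupoid_quantale lact ract mult i (lower_adj d) u"
  unfolding groupoid_quantale_def
  using based_quantal_frame multiplicative support equivariant_support reflexive
    unit_laws inverse_law
  by blast

end

theorem theorem5p13:
  fixes d r :: "'a0::frame \<Rightarrow> 'a1::frame" and u :: "'a1 \<Rightarrow> 'a0" and i :: "'a1 \<Rightarrow> 'a1"
    and m p1 p2 :: "'a1 \<Rightarrow> 'a2::frame" and q1 :: "'a2 \<Rightarrow> 'a3::frame" and q2 :: "'a1 \<Rightarrow> 'a3"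
  assumes "open_localic_groupoid d r u i m p1 p2 q1 q2"
  shows "groupoid_quantale (OG_lact d) (OG_ract r) (OG_mult m p1 p2) i (lower_adj d) u"
proof -
  interpret open_localic_gpd d r u i m p1 p2 q1 q2
    using assms unfolding open_localic_groupoid_def by unfold_locales blast+
  show ?thesis
    by (rule groupoid_quantale)
qed

end
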